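(* Let $G$ be a connected graph on $X$. For every $k\ge1$ and every set $A\subseteq X$ with finite edge-boundary $\delta A$, the set $N_k(A)$ is finite.
   Context: A graph on $X$ is an irreflexive symmetric relation $G\subseteq X^2$. For $A\subseteq X$, $\delta A$ is the set of edges with one endpoint in $A$ and the other in $A^c:=X\setminus A$. A cut is a set $A$ with $A$, $A^c$ infinite and $\delta A$ finite; a cut is neat if the induced subgraphs on $A$ and $A^c$ are connected; $\mathcal C_k$ is the set of neat cuts $A$ with $|\delta A|=k$. Sets $A,B$ are nested if one of $A\cap B$, $A\cap B^c$, $A^c\cap B$, $A^c\cap B^c$ is empty. $N_k(A)$ is the set of cuts in $\mathcal C_k$ that are not nested with $A$. *)

theory Defs
  imports Main
begin

definition graph_on :: "'a set \<Rightarrow> ('a \<times> 'a) set \<Rightarrow> bool" where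
  "graph_on X G \<longleftrightarrow> G \<subseteq> X \<times> X \<and> irrefl G \<and> sym G"

definition induced_connected :: "('a \<times> 'a) set \<Rightarrow> 'a set \<Rightarrow> bool" where
  "induced_connected G S \<longleftrightarrow> (\<forall>x\<in>S. \<forall>y\<in>S. (x, y) \<in> (G \<inter> (S \<times> S))\<^sup>*)"

definition connected_graph :: "'a set \<Rightarrow> ('a \<times> 'a) set \<Rightarrow> bool" where
  "connected_graph X G \<longleftrightarrow> graph_on X G \<and> induced_connected G X"

text \<open>Edge boundary: each edge between A and its complement X - A is represented
  once, as the pair oriented from A to X - A.\<close>
definition boundary :: "'a set \<Rightarrow> ('a \<times> 'a) set \<Rightarrow> 'a set \<Rightarrow> ('a \<times> 'a) set" where
  "boundary X G A = {(x, y) \<in> G. x \<in> A \<and> y \<in> X - A}"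

definition is_cut :: "'a set \<Rightarrow> ('a \<times> 'a) set \<Rightarrow> 'a set \<Rightarrow> bool" where
  "is_cut X G A \<longleftrightarrow> A \<subseteq> X \<and> infinite A \<and> infinite (X - A) \<and> finite (boundary X G A)"

definition neat_cut :: "'a set \<Rightarrow> ('a \<times> 'a) set \<Rightarrow> 'a set \<Rightarrow> bool" where
  "neat_cut X G A \<longleftrightarrow> is_cut X G A \<and> induced_connected G A \<and> induced_connected G (X - A)"

definition neat_cuts :: "'a set \<Rightarrow> ('a \<times> 'a) set \<Rightarrow> nat \<Rightarrow> 'a set set" where
  "neat_cuts X G k = {A. neat_cut X G A \<and> card (boundary X G A) = k}"

definition nested :: "'a set \<Rightarrow> 'a set \<Rightarrow> 'a set \<Rightarrow> bool" where
  "nested X A B \<longleftrightarrow> A \<inter> B = {} \<or> A \<inter> (X - B) = {} \<or> (X - A) \<inter> B = {}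
     \<or> (X - A) \<inter> (X - B) = {}"

definition N_set :: "'a set \<Rightarrow> ('a \<times> 'a) set \<Rightarrow> nat \<Rightarrow> 'a set \<Rightarrow> 'a set set" where
  "N_set X G k A = {B \<in> neat_cuts X G k. \<not> nested X A B}"

end

theory Submission
  imports Defs
begin

text \<open>Every neat cut B that is not nested with A contains an edge of \<open>\<delta>A\<close> in the
  induced subgraph on B, and another one in the induced subgraph on \<open>X - B\<close>.
  Since \<open>\<delta>A\<close> is finite, a single finite set S of edges of G connects all tails of
  \<open>\<delta>A\<close>, so B separates the two endpoints of some edge of S. It therefore suffices
  to show that for a fixed edge (u, v) only finitely many sets B with connected
  sides and \<open>|\<delta>B| = k\<close> separate u from v. This goes by induction on k: delete
  (u, v). If u and v stay connected, B separates some edge of a finite u-v path in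
  the smaller graph, where its boundary has k - 1 edges. If not, B is forced to be
  the component of u in the smaller graph.\<close>

lemma rtrancl_finite_subrel:
  "(a, b) \<in> R\<^sup>* \<Longrightarrow> \<exists>S. finite S \<and> S \<subseteq> R \<and> (a, b) \<in> S\<^sup>*"
proof (induction rule: rtrancl_induct)
  case base
  then show ?case by blast
next
  case (step y z)
  then obtain S where S: "finite S" "S \<subseteq> R" "(a, y) \<in> S\<^sup>*" by blast
  have "(a, y) \<in> (insert (y, z) S)\<^sup>*" using S(3) rtrancl_mono[of S "insert (y, z) S"] by blast
  then have "(a, z) \<in> (insert (y, z) S)\<^sup>*" by (rule rtrancl_into_rtrancl) simp
  then show ?case using S step by blast
qed

lemma rtrancl_exits_set:
  "(a, b) \<in> S\<^sup>* \<Longrightarrow> a \<in> B \<Longrightarrow> b \<notin> B \<Longrightarrow> \<exists>x y. (x, y) \<in> S \<and> x \<in> B \<and> y \<notin> B"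
  by (induction rule: rtrancl_induct) blast+

lemma rtrancl_closed_in:
  "(a, b) \<in> G\<^sup>* \<Longrightarrow> G \<subseteq> X \<times> X \<Longrightarrow> a \<in> X \<Longrightarrow> b \<in> X"
  by (induction rule: rtrancl_induct) auto

lemma finite_subrel_connecting:
  assumes "induced_connected G X" and "F \<subseteq> X" and "finite F"
  shows "\<exists>S. finite S \<and> S \<subseteq> G \<and> (\<forall>x\<in>F. \<forall>y\<in>F. (x, y) \<in> S\<^sup>*)"
proof -
  have "\<forall>p\<in>F \<times> F. \<exists>S. finite S \<and> S \<subseteq> G \<and> p \<in> S\<^sup>*"
  proof
    fix p assume "p \<in> F \<times> F"
    then have "p \<in> (G \<inter> (X \<times> X))\<^sup>*"
      using assms(1,2) unfolding induced_connected_def by auto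
    then have "p \<in> G\<^sup>*" using rtrancl_mono[of "G \<inter> (X \<times> X)" G] by blast
    then show "\<exists>S. finite S \<and> S \<subseteq> G \<and> p \<in> S\<^sup>*"
      using rtrancl_finite_subrel[of "fst p" "snd p"] by simp
  qed
  then obtain S where S: "\<forall>p\<in>F \<times> F. finite (S p) \<and> S p \<subseteq> G \<and> p \<in> (S p)\<^sup>*"
    by (metis bchoice)
  have "(x, y) \<in> (\<Union>(S ` (F \<times> F)))\<^sup>*" if "x \<in> F" "y \<in> F" for x y
    using S that rtrancl_mono[of "S (x, y)" "\<Union>(S ` (F \<times> F))"] by blast
  moreover have "finite (\<Union>(S ` (F \<times> F)))" using S assms(3) by auto
  ultimately show ?thesis using S by blast
qed

text \<open>G need not be symmetric here: in the induction the edge (u, v) is deleted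
  without its reverse.\<close>
definition connected_separations ::
    "'a set \<Rightarrow> ('a \<times> 'a) set \<Rightarrow> 'a \<Rightarrow> 'a \<Rightarrow> nat \<Rightarrow> 'a set set" where
  "connected_separations X G u v k = {B. B \<subseteq> X \<and> u \<in> B \<and> v \<notin> B \<and>
     induced_connected G B \<and> induced_connected G (X - B) \<and>
     finite (boundary X G B) \<and> card (boundary X G B) = k}"

lemma connected_separations_0:
  "(u, v) \<in> G \<Longrightarrow> G \<subseteq> X \<times> X \<Longrightarrow> connected_separations X G u v 0 = {}"
  unfolding connected_separations_def boundary_def by fastforce

lemma induced_connected_delete_outer_edge:
  assumes "(u, v) \<notin> B \<times> B"
  shows "induced_connected (G - {(u, v)}) B = induced_connected G B"
proof -
  have "(G - {(u, v)}) \<inter> (B \<times> B) = G \<inter> (B \<times> B)" using assms by auto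
  then show ?thesis unfolding induced_connected_def by simp
qed

lemma connected_separations_delete_edge:
  assumes B: "B \<in> connected_separations X G u v (Suc m)"
    and "(u, v) \<in> G" and "G \<subseteq> X \<times> X"
    and xy: "x \<in> B" "y \<notin> B"
  shows "B \<in> connected_separations X (G - {(u, v)}) x y m"
proof -
  have uv: "u \<in> B" "v \<notin> B" "v \<in> X" using B assms(3,2)
    unfolding connected_separations_def by auto
  have "(u, v) \<in> boundary X G B" using uv assms(2) unfolding boundary_def by auto
  moreover have "boundary X (G - {(u, v)}) B = boundary X G B - {(u, v)}"
    unfolding boundary_def by auto
  ultimately show ?thesis
    using B xy uv induced_connected_delete_outer_edge[of u v B G]
      induced_connected_delete_outer_edge[of u v "X - B" G]
    unfolding connected_separations_def by auto
qed

lemma connected_separation_eq_component: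
  assumes B: "B \<in> connected_separations X G u v k"
    and "(u, v) \<in> G" and "G \<subseteq> X \<times> X"
    and disconnected: "(u, v) \<notin> (G - {(u, v)})\<^sup>*"
  shows "B = {x. (u, x) \<in> (G - {(u, v)})\<^sup>*}"
proof -
  let ?G' = "G - {(u, v)}"
  have uv: "u \<in> B" "v \<notin> B" "u \<in> X" "v \<in> X" and BX: "B \<subseteq> X"
    and conn: "induced_connected G B" "induced_connected G (X - B)"
    using B assms(2,3) unfolding connected_separations_def by auto
  have inside: "G \<inter> (B \<times> B) \<subseteq> ?G'" "G \<inter> ((X - B) \<times> (X - B)) \<subseteq> ?G'"
    using uv by auto
  show ?thesis
  proof (intro equalityI subsetI CollectI)
    fix x assume "x \<in> B"
    then have "(u, x) \<in> (G \<inter> (B \<times> B))\<^sup>*"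
      using conn(1) uv unfolding induced_connected_def by auto
    then show "(u, x) \<in> ?G'\<^sup>*" using inside(1) rtrancl_mono by blast
  next
    fix x assume ux: "x \<in> {x. (u, x) \<in> ?G'\<^sup>*}"
    show "x \<in> B"
    proof (rule ccontr)
      assume "x \<notin> B"
      moreover have "x \<in> X" using ux rtrancl_closed_in[of u x ?G' X] assms(3) uv by auto
      ultimately have "(x, v) \<in> (G \<inter> ((X - B) \<times> (X - B)))\<^sup>*"
        using conn(2) uv unfolding induced_connected_def by auto
      then have "(x, v) \<in> ?G'\<^sup>*" using inside(2) rtrancl_mono by blast
      with ux disconnected show False by (meson CollectD rtrancl_trans)
    qed
  qed
qed

lemma finite_connected_separations:
  "G \<subseteq> X \<times> X \<Longrightarrow> (u, v) \<in> G \<Longrightarrow> finite (connected_separations X G u v k)"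
proof (induction k arbitrary: G u v)
  case 0
  then show ?case by (simp add: connected_separations_0)
next
  case (Suc m)
  let ?G' = "G - {(u, v)}"
  show ?case
  proof (cases "(u, v) \<in> ?G'\<^sup>*")
    case True
    then obtain S where S: "finite S" "S \<subseteq> ?G'" "(u, v) \<in> S\<^sup>*"
      using rtrancl_finite_subrel[OF True] by blast
    have "connected_separations X G u v (Suc m)
          \<subseteq> (\<Union>(x, y)\<in>S. connected_separations X ?G' x y m)"
    proof
      fix B assume B: "B \<in> connected_separations X G u v (Suc m)"
      then have "u \<in> B" "v \<notin> B" unfolding connected_separations_def by auto
      then obtain x y where "(x, y) \<in> S" "x \<in> B" "y \<notin> B"
        using rtrancl_exits_set[OF S(3)] by blast
      then show "B \<in> (\<Union>(x, y)\<in>S. connected_separations X ?G' x y m)"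
        using connected_separations_delete_edge[OF B Suc.prems(2,1)] by fast
    qed
    moreover have "finite (\<Union>(x, y)\<in>S. connected_separations X ?G' x y m)"
    proof (intro finite_UN_I S(1))
      fix e assume "e \<in> S"
      then show "finite (case e of (x, y) \<Rightarrow> connected_separations X ?G' x y m)"
        using S(2) Suc.prems(1) Suc.IH[of ?G' "fst e" "snd e"] by (cases e) auto
    qed
    ultimately show ?thesis by (rule finite_subset)
  next
    case False
    then have "connected_separations X G u v (Suc m) \<subseteq> {{x. (u, x) \<in> ?G'\<^sup>*}}"
      using connected_separation_eq_component[OF _ Suc.prems(2,1)] by (intro subsetI) simp
    then show ?thesis by (rule finite_subset) simp
  qed
qed

lemma crossing_set_contains_boundary_tail:
  assumes "induced_connected G C" and "G \<subseteq> X \<times> X"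
    and "a \<in> A \<inter> C" and "b \<in> C - A"
  shows "\<exists>x\<in>C. x \<in> fst ` boundary X G A"
proof -
  have "(a, b) \<in> (G \<inter> (C \<times> C))\<^sup>*"
    using assms(1,3,4) unfolding induced_connected_def by auto
  then obtain x y where "(x, y) \<in> G \<inter> (C \<times> C)" "x \<in> A" "y \<notin> A"
    using rtrancl_exits_set[of a b "G \<inter> (C \<times> C)" A] assms(3,4) by blast
  then have "(x, y) \<in> boundary X G A" "x \<in> C" using assms(2) unfolding boundary_def by auto
  then show ?thesis by force
qed

theorem mainTheorem17:
  fixes X :: "'a set" and G :: "('a \<times> 'a) set" and A :: "'a set" and k :: nat
  assumes "connected_graph X G"
    and "k \<ge> 1"
    and "A \<subseteq> X"
    and "finite (boundary X G A)"
  shows "finite (N_set X G k A)"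
proof -
  let ?F = "fst ` boundary X G A"
  have GX: "G \<subseteq> X \<times> X" and conn_X: "induced_connected G X"
    using assms(1) unfolding connected_graph_def graph_on_def by auto
  have F_X: "?F \<subseteq> X" using assms(3) unfolding boundary_def by force
  obtain S where S: "finite S" "S \<subseteq> G" "\<forall>x\<in>?F. \<forall>y\<in>?F. (x, y) \<in> S\<^sup>*"
    using finite_subrel_connecting[OF conn_X F_X finite_imageI[OF assms(4)]] by blast
  have "N_set X G k A \<subseteq> (\<Union>(p, q)\<in>S. connected_separations X G p q k)"
  proof
    fix B assume "B \<in> N_set X G k A"
    then have B: "neat_cut X G B" "card (boundary X G B) = k" "\<not> nested X A B"
      unfolding N_set_def neat_cuts_def by auto
    have "finite (boundary X G B)" using B(2) assms(2) by (intro card_ge_0_finite) simp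
    then have sep: "B \<in> connected_separations X G p q k" if "p \<in> B" "q \<notin> B" for p q
      using B that unfolding neat_cut_def is_cut_def connected_separations_def by auto
    have conn: "induced_connected G B" "induced_connected G (X - B)"
      using B(1) unfolding neat_cut_def by auto
    obtain a b a' b' where "a \<in> A \<inter> B" "b \<in> B - A" "a' \<in> A \<inter> (X - B)" "b' \<in> (X - B) - A"
      using B(3) unfolding nested_def by blast
    then obtain x x' where "x \<in> B" "x \<in> ?F" "x' \<in> X - B" "x' \<in> ?F"
      using crossing_set_contains_boundary_tail[OF conn(1) GX]
        crossing_set_contains_boundary_tail[OF conn(2) GX] by meson
    then obtain p q where "(p, q) \<in> S" "p \<in> B" "q \<notin> B"
      using S(3) rtrancl_exits_set[of x x' S B] by blast
    with sep show "B \<in> (\<Union>(p, q)\<in>S. connected_separations X G p q k)" by blast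
  qed
  moreover have "finite (\<Union>(p, q)\<in>S. connected_separations X G p q k)"
    using S(1,2) GX by (auto intro!: finite_connected_separations)
  ultimately show ?thesis by (rule finite_subset)
qed

end
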